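(* There exist constants $\varepsilon>0$ and $C>0$ such that $g(n)\le C(2-\varepsilon)^n$ for all positive integers $n$.
   Context: $[m]_0=\{0,1,\dots,m\}$. For positive integers $m$, $g(m)=\sum 2^{-|(S_1+S_2)\cap[m]_0|}$, the sum over all pairs $S_1,S_2\subseteq[m]_0$ with $0\in S_1\cap S_2$ and $m+1\notin S_1+S_2$, where $S_1+S_2=\{u+v:u\in S_1,v\in S_2\}$; $g(m)=1$ for integers $m\le 0$. *)

theory Defs
  imports Complex_Main
begin

definition sumset :: "nat set \<Rightarrow> nat set \<Rightarrow> nat set" where
  "sumset A B = {u + v | u v. u \<in> A \<and> v \<in> B}"

definition g :: "int \<Rightarrow> real" where
  "g m = (if m \<le> 0 then 1 else
     (let n = nat m in
      \<Sum>p \<in> {(S1, S2). S1 \<subseteq> {0..n} \<and> S2 \<subseteq> {0..n} \<and> 0 \<in> S1 \<and> 0 \<in> S2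
                        \<and> n + 1 \<notin> sumset S1 S2}.
        (1/2) ^ card (sumset (fst p) (snd p) \<inter> {0..n})))"

end

theory Submission
  imports Defs "HOL-Library.FuncSet"
begin

(* Pair each u with 1 \<le> u \<le> n div 2 with its mirror n + 1 - u. Since n + 1 \<notin> A + B, the
   memberships of u and n + 1 - u in A and B can take only 9 of the 16 conceivable patterns.
   With x the least positive element of A, every element of A or B, and every x + b with b \<in> B,
   lies in A + B; these witnesses tie position u to u - x and u + x, so the weight of a pair (A, B)
   is bounded by a product along the chains u, u + x, u + 2x, ....  A transfer-matrix estimate
   with an explicit potential bounds the sum of that product over all patterns by 39/10 per
   position, giving g(n) \<le> 4 (n + 1) (39/10)^(n div 2); and (39/10)^(1/2) < 2. *)

definition half_if :: "bool \<Rightarrow> real" where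
  "half_if c = (if c then 1/2 else 1)"

lemma half_if_nonneg: "0 \<le> half_if c"
  by (simp add: half_if_def)

lemma prod_half_if: "finite I \<Longrightarrow> (\<Prod>u\<in>I. half_if (P u)) = (1/2) ^ card {u\<in>I. P u}"
  by (simp add: half_if_def prod.If_cases Int_def)

lemma in_sumsetI: "a \<in> A \<Longrightarrow> b \<in> B \<Longrightarrow> a + b = e \<Longrightarrow> e \<in> sumset A B"
  unfolding sumset_def by blast

lemma in_sumset_cover:
  assumes "0 \<in> A" "0 \<in> B" "e \<in> A \<or> e \<in> B \<or> (x \<in> A \<and> x \<le> e \<and> e - x \<in> B)"
  shows "e \<in> sumset A B"
  using assms(3)
proof (elim disjE conjE)
  assume "x \<in> A" "x \<le> e" "e - x \<in> B"
  then show ?thesis by (intro in_sumsetI[of x A "e - x"]) auto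
qed (use assms(1,2) in \<open>auto intro: in_sumsetI\<close>)

(* The cell at position u records whether u lies in A, u in B, n + 1 - u in A, n + 1 - u in B. *)
datatype cell = Cell (lowA: bool) (lowB: bool) (highA: bool) (highB: bool)

lemma finite_cell [simp]: "finite (UNIV :: cell set)"
proof -
  have "(UNIV :: cell set) = (\<lambda>(a, b, c, d). Cell a b c d) ` UNIV"
  proof (rule set_eqI)
    fix c :: cell
    show "c \<in> UNIV \<longleftrightarrow> c \<in> (\<lambda>(a, b, c, d). Cell a b c d) ` UNIV"
      by (cases c) (auto intro: rev_image_eqI[of "(_, _, _, _)"])
  qed
  then show ?thesis by (metis finite_UNIV finite_imageI)
qed

(* The cells compatible with n + 1 \<notin> A + B and with x being the least positive element of A. *)
definition admissible :: "nat \<Rightarrow> nat \<Rightarrow> cell set" where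
  "admissible x u = {c. \<not> (lowA c \<and> highB c) \<and> \<not> (lowB c \<and> highA c)
                        \<and> (u < x \<longrightarrow> \<not> lowA c) \<and> (u = x \<longrightarrow> lowA c)}"

lemma finite_admissible [simp]: "finite (admissible x u)"
  by (rule finite_subset[OF subset_UNIV finite_cell])

lemma admissible_after: "x < u \<Longrightarrow> admissible x u =
  {Cell False False False False, Cell False False False True, Cell False False True False,
   Cell False True False False, Cell False True False True, Cell True False False False,
   Cell True False True False, Cell True True False False, Cell False False True True}"
  unfolding admissible_def by (rule set_eqI, case_tac xa) auto

lemma admissible_before: "u < x \<Longrightarrow> admissible x u =
  {Cell False False False False, Cell False False False True, Cell False False True False,
   Cell False True False False, Cell False True False True, Cell False False True True}"
  unfolding admissible_def by (rule set_eqI, case_tac xa) auto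

lemma admissible_at: "admissible x x =
  {Cell True False False False, Cell True False True False, Cell True True False False}"
  unfolding admissible_def by (rule set_eqI, case_tac xa) auto

definition rho :: real where
  "rho = 39/10"

(* Bounds the weight still owed through cell c by the part of its chain beyond c; the constants
   are tuned so that the transfer inequalities below hold. *)
definition potential :: "cell \<Rightarrow> real" where
  "potential c = (if lowB c then (if highA c \<or> highB c then 11/25 else 19/25)
                  else (if highA c \<or> highB c then 63/100 else 21/20))"

(* The factor paid by the high half of the most recently placed cell of a chain. *)
definition tail_weight :: "bool \<Rightarrow> cell \<Rightarrow> real" where
  "tail_weight final c = (if final then half_if (highA c \<or> highB c) else potential c)"

lemma tail_weight_nonneg: "0 \<le> tail_weight final c"
  by (simp add: tail_weight_def half_if_def potential_def)

lemma transfer_step: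
  assumes "x < u"
  shows "(\<Sum>c\<in>admissible x u. half_if (lowA c \<or> lowB c \<or> lowB p) * tail_weight final c
            * half_if (highA p \<or> highB p \<or> highB c)) \<le> rho * potential p"
  using assms by (cases final; cases p)
    (auto simp: admissible_after tail_weight_def half_if_def potential_def rho_def)

lemma transfer_start:
  assumes "u \<le> x"
  shows "(\<Sum>c\<in>admissible x u. half_if (lowA c \<or> lowB c) * tail_weight final c) \<le> rho"
  using assms by (cases "u < x"; cases final)
    (auto simp: admissible_before admissible_at tail_weight_def half_if_def potential_def rho_def)

(* u is covered by the witness x + (u - x), and n + 1 - u by x + (n + 1 - (u + x)). *)
definition low_weight :: "nat \<Rightarrow> (nat \<Rightarrow> cell) \<Rightarrow> nat \<Rightarrow> real" where
  "low_weight x \<sigma> u = half_if (lowA (\<sigma> u) \<or> lowB (\<sigma> u) \<or> (x < u \<and> lowB (\<sigma> (u - x))))"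

definition high_weight :: "nat \<Rightarrow> nat \<Rightarrow> (nat \<Rightarrow> cell) \<Rightarrow> nat \<Rightarrow> real" where
  "high_weight k x \<sigma> u = half_if (highA (\<sigma> u) \<or> highB (\<sigma> u) \<or> (u + x \<le> k \<and> highB (\<sigma> (u + x))))"

definition factor :: "nat \<Rightarrow> nat \<Rightarrow> nat \<Rightarrow> (nat \<Rightarrow> cell) \<Rightarrow> nat \<Rightarrow> real" where
  "factor k x j \<sigma> u = low_weight x \<sigma> u *
     (if u + x \<le> j then high_weight k x \<sigma> u else tail_weight (k < u + x) (\<sigma> u))"

(* The weight of the first j of the k cells: a cell whose chain successor is not yet placed pays
   tail_weight instead of its high weight. *)
definition partial_weight :: "nat \<Rightarrow> nat \<Rightarrow> nat \<Rightarrow> (nat \<Rightarrow> cell) \<Rightarrow> real" where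
  "partial_weight k x j \<sigma> = (\<Prod>u\<in>{1..j}. factor k x j \<sigma> u)"

lemma factor_nonneg: "0 \<le> factor k x j \<sigma> u"
  by (simp add: factor_def low_weight_def high_weight_def half_if_nonneg tail_weight_nonneg)

lemma partial_weight_nonneg: "0 \<le> partial_weight k x j \<sigma>"
  unfolding partial_weight_def by (intro prod_nonneg) (simp add: factor_nonneg)

lemma partial_weight_Suc:
  "partial_weight k x (Suc j) \<sigma> = factor k x (Suc j) \<sigma> (Suc j) * (\<Prod>u\<in>{1..j}. factor k x (Suc j) \<sigma> u)"
  unfolding partial_weight_def by (simp add: atLeastAtMostSuc_conv)

lemma partial_weight_complete:
  "partial_weight k x k \<sigma> = (\<Prod>u\<in>{1..k}. low_weight x \<sigma> u * high_weight k x \<sigma> u)"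
  unfolding partial_weight_def
  by (rule prod.cong) (auto simp: factor_def tail_weight_def high_weight_def)

lemma factor_update_new:
  assumes "1 \<le> x"
  shows "factor k x (Suc j) (\<sigma>(Suc j := c)) (Suc j) =
    half_if (lowA c \<or> lowB c \<or> (x < Suc j \<and> lowB (\<sigma> (Suc j - x)))) * tail_weight (k < Suc j + x) c"
  using assms by (auto simp: factor_def low_weight_def)

lemma factor_update_old:
  assumes "u \<le> j" "u + x \<noteq> Suc j"
  shows "factor k x (Suc j) (\<sigma>(Suc j := c)) u = factor k x j \<sigma> u"
  using assms by (auto simp: factor_def low_weight_def high_weight_def)

lemma sum_extend_new_chain:
  assumes "1 \<le> x" "j < x"
  shows "(\<Sum>c\<in>admissible x (Suc j). partial_weight k x (Suc j) (\<sigma>(Suc j := c)))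
           \<le> rho * partial_weight k x j \<sigma>"
proof -
  have "partial_weight k x (Suc j) (\<sigma>(Suc j := c)) =
      half_if (lowA c \<or> lowB c) * tail_weight (k < Suc j + x) c * partial_weight k x j \<sigma>" for c
    using assms by (simp add: partial_weight_Suc factor_update_new factor_update_old partial_weight_def)
  then have "(\<Sum>c\<in>admissible x (Suc j). partial_weight k x (Suc j) (\<sigma>(Suc j := c))) =
      (\<Sum>c\<in>admissible x (Suc j). half_if (lowA c \<or> lowB c) * tail_weight (k < Suc j + x) c)
        * partial_weight k x j \<sigma>"
    by (simp add: sum_distrib_right)
  also have "\<dots> \<le> rho * partial_weight k x j \<sigma>"
    using assms by (intro mult_right_mono transfer_start partial_weight_nonneg) simp
  finally show ?thesis .
qed

lemma sum_extend_chain: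
  assumes "1 \<le> x" "x \<le> j" "Suc j \<le> k"
  shows "(\<Sum>c\<in>admissible x (Suc j). partial_weight k x (Suc j) (\<sigma>(Suc j := c)))
           \<le> rho * partial_weight k x j \<sigma>"
proof -
  (* Only the factor of the chain predecessor t changes: it trades its potential for its actual
     high weight. *)
  define t where "t = Suc j - x"
  have t: "t \<in> {1..j}" "t + x = Suc j" using assms by (auto simp: t_def)
  define rest where "rest = (\<Prod>u\<in>{1..j}-{t}. factor k x j \<sigma> u)"
  define step where "step c = half_if (lowA c \<or> lowB c \<or> lowB (\<sigma> t)) * tail_weight (k < Suc j + x) c
                              * half_if (highA (\<sigma> t) \<or> highB (\<sigma> t) \<or> highB c)" for c
  have "(\<Prod>u\<in>{1..j}. factor k x (Suc j) (\<sigma>(Suc j := c)) u) =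
      factor k x (Suc j) (\<sigma>(Suc j := c)) t * rest" for c
    using t by (simp add: prod.remove rest_def factor_update_old)
  moreover have "factor k x (Suc j) (\<sigma>(Suc j := c)) t =
      low_weight x \<sigma> t * half_if (highA (\<sigma> t) \<or> highB (\<sigma> t) \<or> highB c)" for c
    using t assms by (auto simp: factor_def low_weight_def high_weight_def)
  ultimately have new: "partial_weight k x (Suc j) (\<sigma>(Suc j := c)) = step c * (low_weight x \<sigma> t * rest)" for c
    using assms t by (simp add: partial_weight_Suc factor_update_new step_def t_def mult_ac)
  have "factor k x j \<sigma> t = low_weight x \<sigma> t * potential (\<sigma> t)"
    using t assms by (simp add: factor_def tail_weight_def)
  then have old: "partial_weight k x j \<sigma> = potential (\<sigma> t) * (low_weight x \<sigma> t * rest)"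
    using t by (simp add: partial_weight_def rest_def prod.remove mult_ac)
  have "(\<Sum>c\<in>admissible x (Suc j). partial_weight k x (Suc j) (\<sigma>(Suc j := c))) =
      (\<Sum>c\<in>admissible x (Suc j). step c) * (low_weight x \<sigma> t * rest)"
    by (simp add: new sum_distrib_right)
  also have "\<dots> \<le> rho * potential (\<sigma> t) * (low_weight x \<sigma> t * rest)"
    using assms unfolding step_def
    by (intro mult_right_mono transfer_step mult_nonneg_nonneg prod_nonneg)
      (auto simp: rest_def low_weight_def half_if_nonneg factor_nonneg intro: prod_nonneg)
  finally show ?thesis by (simp add: old mult_ac)
qed

lemma sum_partial_weight_le:
  assumes "1 \<le> x" "j \<le> k"
  shows "(\<Sum>\<sigma>\<in>PiE {1..j} (admissible x). partial_weight k x j \<sigma>) \<le> rho ^ j"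
  using assms(2)
proof (induction j)
  case 0
  then show ?case by (simp add: partial_weight_def)
next
  case (Suc j)
  let ?\<Sigma> = "PiE {1..j} (admissible x)"
  have "{1..Suc j} = insert (Suc j) {1..j}" by auto
  then have "(\<Sum>\<sigma>\<in>PiE {1..Suc j} (admissible x). partial_weight k x (Suc j) \<sigma>) =
      (\<Sum>p\<in>admissible x (Suc j) \<times> ?\<Sigma>. partial_weight k x (Suc j) ((\<lambda>(c, \<sigma>). \<sigma>(Suc j := c)) p))"
    by (simp only: PiE_insert_eq) (subst sum.reindex; auto intro: inj_combinator)
  also have "\<dots> = (\<Sum>c\<in>admissible x (Suc j). \<Sum>\<sigma>\<in>?\<Sigma>. partial_weight k x (Suc j) (\<sigma>(Suc j := c)))"
    by (simp add: sum.cartesian_product split_beta)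
  also have "\<dots> = (\<Sum>\<sigma>\<in>?\<Sigma>. \<Sum>c\<in>admissible x (Suc j). partial_weight k x (Suc j) (\<sigma>(Suc j := c)))"
    by (rule sum.swap)
  also have "\<dots> \<le> (\<Sum>\<sigma>\<in>?\<Sigma>. rho * partial_weight k x j \<sigma>)"
    using assms(1) Suc.prems
    by (intro sum_mono) (cases "x \<le> j"; simp add: sum_extend_chain sum_extend_new_chain)
  also have "\<dots> = rho * (\<Sum>\<sigma>\<in>?\<Sigma>. partial_weight k x j \<sigma>)"
    by (simp add: sum_distrib_left)
  also have "\<dots> \<le> rho * rho ^ j"
    using Suc by (intro mult_left_mono) (simp_all add: rho_def)
  finally show ?case by simp
qed

definition pairs :: "nat \<Rightarrow> (nat set \<times> nat set) set" where
  "pairs n = {(A, B). A \<subseteq> {0..n} \<and> B \<subseteq> {0..n} \<and> 0 \<in> A \<and> 0 \<in> B \<and> n + 1 \<notin> sumset A B}"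

definition pair_weight :: "nat \<Rightarrow> nat set \<times> nat set \<Rightarrow> real" where
  "pair_weight n p = (1/2) ^ card (sumset (fst p) (snd p) \<inter> {0..n})"

lemma g_eq_sum_pairs: "1 \<le> n \<Longrightarrow> g (int n) = (\<Sum>p\<in>pairs n. pair_weight n p)"
  by (simp add: g_def pairs_def pair_weight_def Let_def)

lemma finite_pairs: "finite (pairs n)"
  by (rule finite_subset[of _ "Pow {0..n} \<times> Pow {0..n}"]) (auto simp: pairs_def)

(* x = n + 1 stands for A having no positive element. *)
definition first_positive :: "nat \<Rightarrow> nat \<Rightarrow> nat set \<Rightarrow> bool" where
  "first_positive n x A \<longleftrightarrow> A \<inter> {1..<x} = {} \<and> (x \<le> n \<longrightarrow> x \<in> A)"

lemma first_positive_exists: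
  assumes "A \<subseteq> {0..n}"
  shows "\<exists>x\<in>{1..n+1}. first_positive n x A"
proof (cases "{a\<in>A. 0 < a} = {}")
  case True
  then show ?thesis by (intro bexI[of _ "n+1"]) (auto simp: first_positive_def)
next
  case False
  have fin: "finite {a\<in>A. 0 < a}" by (rule finite_subset[of _ "{0..n}"]) (use assms in auto)
  define x where "x = Min {a\<in>A. 0 < a}"
  have "x \<in> {a\<in>A. 0 < a}" unfolding x_def using fin False by (rule Min_in)
  moreover have "x \<le> a" if "a \<in> A" "0 < a" for a unfolding x_def using fin that by auto
  ultimately show ?thesis using assms by (intro bexI[of _ x]) (fastforce simp: first_positive_def)+
qed

definition cells :: "nat \<Rightarrow> nat set \<Rightarrow> nat set \<Rightarrow> nat \<Rightarrow> cell" where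
  "cells n A B = (\<lambda>u. if u \<in> {1..n div 2} then Cell (u \<in> A) (u \<in> B) (n + 1 - u \<in> A) (n + 1 - u \<in> B)
                      else undefined)"

lemma cells_admissible:
  assumes "(A, B) \<in> pairs n" "first_positive n x A"
  shows "cells n A B \<in> PiE {1..n div 2} (admissible x)"
proof (rule PiE_I)
  fix u assume u: "u \<in> {1..n div 2}"
  have "n + 1 \<notin> sumset A B" using assms(1) by (simp add: pairs_def)
  then have "\<not> (u \<in> A \<and> n + 1 - u \<in> B)" "\<not> (u \<in> B \<and> n + 1 - u \<in> A)"
    using u by (auto intro: in_sumsetI)
  then show "cells n A B u \<in> admissible x u"
    using u assms(2) by (auto simp: cells_def admissible_def first_positive_def)
qed (auto simp: cells_def)

lemma card_covered_le:
  assumes "(A, B) \<in> pairs n" "first_positive n x A" "1 \<le> x"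
  defines "k \<equiv> n div 2"
  shows "card {u\<in>{1..k}. u \<in> A \<or> u \<in> B \<or> (x < u \<and> u - x \<in> B)}
       + card {u\<in>{1..k}. n + 1 - u \<in> A \<or> n + 1 - u \<in> B \<or> (u + x \<le> k \<and> n + 1 - (u + x) \<in> B)}
       \<le> card (sumset A B \<inter> {0..n})"
    (is "card ?S1 + card ?S2 \<le> _")
proof -
  have A0: "0 \<in> A" and B0: "0 \<in> B" using assms(1) by (auto simp: pairs_def)
  have xA: "x \<in> A" if "x < k" using assms(2) that by (auto simp: first_positive_def k_def)
  let ?mirror = "\<lambda>u. n + 1 - u"
  have "?S1 \<subseteq> sumset A B \<inter> {0..n}"
  proof
    fix u assume u: "u \<in> ?S1"
    then have "u \<in> A \<or> u \<in> B \<or> (x \<in> A \<and> x \<le> u \<and> u - x \<in> B)" using xA by auto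
    then show "u \<in> sumset A B \<inter> {0..n}"
      using u A0 B0 in_sumset_cover by (auto simp: k_def)
  qed
  moreover have "?mirror ` ?S2 \<subseteq> sumset A B \<inter> {0..n}"
  proof
    fix e assume "e \<in> ?mirror ` ?S2"
    then obtain u where u: "u \<in> ?S2" and e: "e = n + 1 - u" by blast
    then have "e \<in> A \<or> e \<in> B \<or> (x \<in> A \<and> x \<le> e \<and> e - x \<in> B)"
      using xA by (auto simp: k_def)
    then show "e \<in> sumset A B \<inter> {0..n}"
      using u e A0 B0 in_sumset_cover by (auto simp: k_def)
  qed
  ultimately have "?S1 \<union> ?mirror ` ?S2 \<subseteq> sumset A B \<inter> {0..n}" by blast
  then have "card (?S1 \<union> ?mirror ` ?S2) \<le> card (sumset A B \<inter> {0..n})"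
    by (intro card_mono) auto
  moreover have "?S1 \<inter> ?mirror ` ?S2 = {}" "inj_on ?mirror ?S2"
    by (auto simp: k_def inj_on_def)
  ultimately show ?thesis
    by (simp add: card_Un_disjoint card_image)
qed

lemma pair_weight_le_partial_weight:
  assumes "(A, B) \<in> pairs n" "first_positive n x A" "1 \<le> x"
  shows "pair_weight n (A, B) \<le> partial_weight (n div 2) x (n div 2) (cells n A B)"
proof -
  define k where "k = n div 2"
  let ?P1 = "\<lambda>u. u \<in> A \<or> u \<in> B \<or> (x < u \<and> u - x \<in> B)"
  let ?P2 = "\<lambda>u. n + 1 - u \<in> A \<or> n + 1 - u \<in> B \<or> (u + x \<le> k \<and> n + 1 - (u + x) \<in> B)"
  have low: "low_weight x (cells n A B) u = half_if (?P1 u)" if "u \<in> {1..k}" for u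
    using that assms(3) by (cases "x < u") (auto simp: low_weight_def cells_def k_def)
  have high: "high_weight k x (cells n A B) u = half_if (?P2 u)" if "u \<in> {1..k}" for u
    using that by (cases "u + x \<le> k") (auto simp: high_weight_def cells_def k_def)
  have "partial_weight k x k (cells n A B) = (\<Prod>u\<in>{1..k}. half_if (?P1 u) * half_if (?P2 u))"
    unfolding partial_weight_complete by (rule prod.cong) (simp_all add: low high)
  also have "\<dots> = (1/2) ^ (card {u\<in>{1..k}. ?P1 u} + card {u\<in>{1..k}. ?P2 u})"
    by (simp add: prod.distrib prod_half_if power_add)
  also have "\<dots> \<ge> pair_weight n (A, B)"
    unfolding pair_weight_def k_def using card_covered_le[OF assms] by (intro power_decreasing) auto
  finally show ?thesis by (simp add: k_def)
qed

lemma cells_inj: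
  assumes "(A, B) \<in> pairs n" "(A', B') \<in> pairs n" "cells n A B = cells n A' B'"
    and "(n div 2 + 1 \<in> A) = (n div 2 + 1 \<in> A')" "(n div 2 + 1 \<in> B) = (n div 2 + 1 \<in> B')"
  shows "A = A' \<and> B = B'"
proof -
  have low: "(u \<in> A) = (u \<in> A') \<and> (u \<in> B) = (u \<in> B')
           \<and> (n + 1 - u \<in> A) = (n + 1 - u \<in> A') \<and> (n + 1 - u \<in> B) = (n + 1 - u \<in> B')"
    if "u \<in> {1..n div 2}" for u
    using fun_cong[OF assms(3), of u] that by (simp add: cells_def)
  have "(e \<in> A) = (e \<in> A') \<and> (e \<in> B) = (e \<in> B')" for e
  proof -
    consider "e = 0" | "n < e" | "e \<in> {1..n div 2}" | "e = n div 2 + 1" | "n + 1 - e \<in> {1..n div 2}"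
      by fastforce
    then show ?thesis
    proof cases
      case 5
      then have "n + 1 - (n + 1 - e) = e" by auto
      then show ?thesis using low[OF 5] by metis
    qed (use assms(1,2,4,5) low in \<open>auto simp: pairs_def\<close>)
  qed
  then show ?thesis by blast
qed

lemma sum_first_positive_le:
  assumes "1 \<le> x"
  shows "(\<Sum>p\<in>{p\<in>pairs n. first_positive n x (fst p)}. pair_weight n p) \<le> 4 * rho ^ (n div 2)"
proof -
  define k where "k = n div 2"
  define P where "P = {p\<in>pairs n. first_positive n x (fst p)}"
  define code where "code p = (cells n (fst p) (snd p), (k + 1 \<in> fst p, k + 1 \<in> snd p))" for p
  let ?C = "PiE {1..k} (admissible x) \<times> (UNIV :: (bool \<times> bool) set)"
  have code: "pair_weight n p \<le> partial_weight k x k (fst (code p)) \<and> code p \<in> ?C" if "p \<in> P" for p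
    using that assms pair_weight_le_partial_weight[of "fst p" "snd p" n x] cells_admissible[of "fst p" "snd p" n x]
    by (simp add: P_def code_def k_def)
  have "inj_on code P"
    using cells_inj by (fastforce simp: inj_on_def P_def code_def k_def)
  then have "(\<Sum>p\<in>P. pair_weight n p) \<le> (\<Sum>z\<in>code ` P. partial_weight k x k (fst z))"
    using code by (simp add: sum.reindex sum_mono)
  also have "\<dots> \<le> (\<Sum>z\<in>?C. partial_weight k x k (fst z))"
  proof (rule sum_mono2)
    show "code ` P \<subseteq> ?C" using code by blast
  qed (simp_all add: finite_PiE partial_weight_nonneg)
  also have "\<dots> = (\<Sum>(\<sigma>, m)\<in>?C. partial_weight k x k \<sigma>)"
    by (simp add: case_prod_beta)
  also have "\<dots> = (\<Sum>\<sigma>\<in>PiE {1..k} (admissible x). \<Sum>m\<in>(UNIV :: (bool \<times> bool) set). partial_weight k x k \<sigma>)"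
    by (rule sum.cartesian_product[symmetric])
  also have "\<dots> = 4 * (\<Sum>\<sigma>\<in>PiE {1..k} (admissible x). partial_weight k x k \<sigma>)"
    by (simp add: sum_distrib_left card_UNIV_bool flip: UNIV_Times_UNIV)
  also have "\<dots> \<le> 4 * rho ^ k"
    using sum_partial_weight_le[OF assms order_refl] by simp
  finally show ?thesis by (simp add: P_def k_def)
qed

lemma g_le: "1 \<le> n \<Longrightarrow> g (int n) \<le> 4 * real (n + 1) * rho ^ (n div 2)"
proof -
  assume "1 \<le> n"
  let ?F = "\<lambda>x p. if first_positive n x (fst p) then pair_weight n p else 0"
  have "g (int n) = (\<Sum>p\<in>pairs n. pair_weight n p)" using g_eq_sum_pairs[OF \<open>1 \<le> n\<close>] .
  also have "\<dots> \<le> (\<Sum>p\<in>pairs n. \<Sum>x\<in>{1..n+1}. ?F x p)"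
  proof (rule sum_mono)
    fix p assume "p \<in> pairs n"
    then have "fst p \<subseteq> {0..n}" by (auto simp: pairs_def)
    then obtain x where x: "x \<in> {1..n+1}" "first_positive n x (fst p)"
      using first_positive_exists by blast
    then have "pair_weight n p = ?F x p" by simp
    also have "\<dots> \<le> (\<Sum>x\<in>{1..n+1}. ?F x p)"
      by (rule member_le_sum[OF x(1)]) (simp_all add: pair_weight_def)
    finally show "pair_weight n p \<le> (\<Sum>x\<in>{1..n+1}. ?F x p)" .
  qed
  also have "\<dots> = (\<Sum>x\<in>{1..n+1}. \<Sum>p\<in>pairs n. ?F x p)"
    by (rule sum.swap)
  also have "\<dots> = (\<Sum>x\<in>{1..n+1}. \<Sum>p\<in>{p\<in>pairs n. first_positive n x (fst p)}. pair_weight n p)"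
    by (simp add: sum.inter_filter finite_pairs)
  also have "\<dots> \<le> (\<Sum>x\<in>{1..n+1}. 4 * rho ^ (n div 2))"
    by (intro sum_mono sum_first_positive_le) simp
  finally show ?thesis by (simp add: algebra_simps)
qed

lemma linear_times_rho_power_le: "4 * real (n + 1) * rho ^ (n div 2) \<le> 531 * (2 - 1/100) ^ n"
proof -
  define s :: real where "s = 79/40"
  define q :: real where "q = 398/395"
  have "rho ^ (n div 2) \<le> (s ^ 2) ^ (n div 2)"
    by (rule power_mono) (simp_all add: rho_def s_def power2_eq_square)
  also have "\<dots> \<le> s ^ n"
    by (simp add: power_mult[symmetric] s_def power_increasing)
  finally have rho_le: "rho ^ (n div 2) \<le> s ^ n" .
  have "1 + real n * (3/395) \<le> q ^ n"
    using Bernoulli_inequality[of "3/395::real" n] by (simp add: q_def)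
  moreover have "1 \<le> q ^ n" by (simp add: q_def)
  ultimately have n_le: "real (n + 1) \<le> 398/3 * q ^ n" by simp
  have "4 * real (n + 1) * rho ^ (n div 2) \<le> 4 * (398/3 * q ^ n) * s ^ n"
    using rho_le n_le by (intro mult_mono) (auto simp: rho_def)
  also have "\<dots> = 1592/3 * (q * s) ^ n" by (simp add: power_mult_distrib)
  also have "q * s = 2 - 1/100" by (simp add: q_def s_def)
  also have "1592/3 * (2 - 1/100 :: real) ^ n \<le> 531 * (2 - 1/100) ^ n"
    by (rule mult_right_mono) auto
  finally show ?thesis .
qed

theorem mainTheorem11:
  shows "\<exists>\<epsilon>::real. \<exists>C::real. \<epsilon> > 0 \<and> C > 0 \<and>
           (\<forall>n::nat. n \<ge> 1 \<longrightarrow> g (int n) \<le> C * (2 - \<epsilon>) ^ n)"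
proof -
  have "\<forall>n::nat. n \<ge> 1 \<longrightarrow> g (int n) \<le> 531 * (2 - 1/100) ^ n"
    using g_le linear_times_rho_power_le order_trans by blast
  then show ?thesis by (intro exI[of _ "1/100"] exI[of _ 531]) simp
qed

end
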